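(* Let $\kappa$ be an ordinal of uncountable cofinality and let $Z$, $Z_Y$, $D^\gamma_\alpha$ be as described in the context. Let $\alpha, \beta \in [2,\kappa)$, let $u: \beta \to \alpha$ be a morphism in $Z$, and let $2 \leq \gamma \leq \min(\alpha, \beta)$. Then $u$ lies in $Z_Y$ and does not pass through any vertex less than $\gamma$ if and only if $D^\gamma_\alpha(a) = u\, D^\gamma_\beta(a)\, u^{-1}$ in $Z$ for all $a \in G_\gamma$.
   Context: For an ordinal $\alpha \ge 2$ let $G_\alpha$ be the free group on the set $\alpha$ (i.e. on $\alpha$ generators indexed by the ordinals below $\alpha$); for $\gamma \le \alpha$ let $D^\gamma_\alpha: G_\gamma \to G_\alpha$ be the natural inclusion. Let $Z$ be the groupoid with object set $[2,\kappa)$ generated by: the elements of $G_\alpha$ as automorphisms of the object $\alpha$, for each $\alpha$; and, for each pair $\alpha \neq \beta$ in $[2,\kappa)$, a morphism $y^\beta_\alpha: \beta \to \alpha$; subject to the relations of each group $G_\alpha$ and the relations $y^\beta_\alpha \, D^{\varepsilon}_\beta(a)\, y^\alpha_\beta = D^{\varepsilon}_\alpha(a)$ for all $a \in G_\varepsilon$, where $\varepsilon = \min(\alpha,\beta)$ (in particular $y^\alpha_\beta = (y^\beta_\alpha)^{-1}$). Equivalently, $Z$ is the fundamental groupoid of the graph of groups with vertices $[2,\kappa)$, vertex groups $G_\alpha$, edges $y^\beta_\alpha$ with involution $y^\beta_\alpha \mapsto y^\alpha_\beta$, edge groups $G_{\min(\alpha,\beta)}$ and edge monomorphisms the inclusions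 into the source vertex group. Elements of $G_\alpha$ are regarded as morphisms of $Z$. $Z_Y$ is the subgroupoid of $Z$ generated by the edges $y^\beta_\alpha$; every morphism of $Z_Y$ can be uniquely written as a reduced word in the generators $y^\beta_\alpha$ (with $y^\alpha_\beta$ the inverse of $y^\beta_\alpha$). A morphism of $Z_Y$ passes through a vertex $\delta$ if this reduced word involves a generator with source or target $\delta$; the identity $\mathrm{id}_\delta$ passes through $\delta$ and no other vertex. *)

theory Defs
  imports Main "HOL-Library.Countable_Set"
begin

text \<open>Ordinals below kappa are modelled by the elements of a well-ordered type 'o
  (so the type 'o itself plays the role of kappa = [0,kappa)).\<close>

definition uncountable_cofinality :: "'o::wellorder set \<Rightarrow> bool" where
  "uncountable_cofinality K \<longleftrightarrow>
     (\<forall>S. S \<subseteq> K \<longrightarrow> countable S \<longrightarrow> (\<exists>x\<in>K. \<forall>s\<in>S. s < x))"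

definition ge2 :: "'o::wellorder \<Rightarrow> bool" where
  "ge2 v \<longleftrightarrow> (\<exists>a b. a < b \<and> b < v)"

text \<open>Gen v i b : the generator i (i < v) of G_v (inverted if b), an automorphism of v.
  Edge t s  : the edge y^s_t : s \<rightarrow> t.
  Words are read in composition order: the rightmost letter is applied first.\<close>
datatype 'o zletter = Gen 'o 'o bool | Edge 'o 'o

fun zpath :: "'o::wellorder \<Rightarrow> 'o \<Rightarrow> 'o zletter list \<Rightarrow> bool" where
  "zpath s t [] \<longleftrightarrow> s = t \<and> ge2 s"
| "zpath s t (Gen v i b # w) \<longleftrightarrow> v = t \<and> ge2 v \<and> i < v \<and> zpath s v w"
| "zpath s t (Edge t' s' # w) \<longleftrightarrow> t' = t \<and> ge2 t' \<and> ge2 s' \<and> s' \<noteq> t' \<and> zpath s s' w"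

text \<open>Words of the free group G_g: lists of generators (index, inverted) with index < g.\<close>
definition gword :: "'o::wellorder \<Rightarrow> ('o \<times> bool) list \<Rightarrow> bool" where
  "gword g a \<longleftrightarrow> (\<forall>(i,b)\<in>set a. i < g)"

text \<open>D_v(a): the element a of some G_g (g \<le> v) regarded as an automorphism of v.\<close>
definition D :: "'o \<Rightarrow> ('o \<times> bool) list \<Rightarrow> 'o zletter list" where
  "D v a = map (\<lambda>(i,b). Gen v i b) a"

fun zinv_letter :: "'o zletter \<Rightarrow> 'o zletter" where
  "zinv_letter (Gen v i b) = Gen v i (\<not> b)"
| "zinv_letter (Edge t s) = Edge s t"

definition zinv :: "'o zletter list \<Rightarrow> 'o zletter list" where
  "zinv w = rev (map zinv_letter w)"

text \<open>Equality of morphisms s \<rightarrow> t in Z: the congruence generated by the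
  defining relations of the presentation.\<close>
inductive zeq :: "'o::wellorder \<Rightarrow> 'o \<Rightarrow> 'o zletter list \<Rightarrow> 'o zletter list \<Rightarrow> bool" where
  zrefl: "zpath s t w \<Longrightarrow> zeq s t w w"
| zsym: "zeq s t w1 w2 \<Longrightarrow> zeq s t w2 w1"
| ztrans: "zeq s t w1 w2 \<Longrightarrow> zeq s t w2 w3 \<Longrightarrow> zeq s t w1 w3"
| zctx: "zeq s t w1 w2 \<Longrightarrow> zpath t t' x \<Longrightarrow> zpath s' s y \<Longrightarrow> zeq s' t' (x @ w1 @ y) (x @ w2 @ y)"
| zfree: "ge2 v \<Longrightarrow> i < v \<Longrightarrow> zeq v v [Gen v i b, Gen v i (\<not> b)] []"
| zedge: "ge2 \<alpha> \<Longrightarrow> ge2 \<beta> \<Longrightarrow> \<alpha> \<noteq> \<beta> \<Longrightarrow> gword (min \<alpha> \<beta>) a \<Longrightarrow>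
          zeq \<alpha> \<alpha> ([Edge \<alpha> \<beta>] @ D \<beta> a @ [Edge \<beta> \<alpha>]) (D \<alpha> a)"

definition edge_word :: "'o zletter list \<Rightarrow> bool" where
  "edge_word w \<longleftrightarrow> (\<forall>l\<in>set w. \<exists>t s. l = Edge t s)"

definition freely_reduced :: "'o zletter list \<Rightarrow> bool" where
  "freely_reduced w \<longleftrightarrow> (\<forall>i. Suc i < length w \<longrightarrow> w ! i \<noteq> zinv_letter (w ! Suc i))"

text \<open>Vertices a word of Z_Y passes through; the empty word at vertex s is id_s.\<close>
definition passes_through :: "'o \<Rightarrow> 'o zletter list \<Rightarrow> 'o \<Rightarrow> bool" where
  "passes_through s w d \<longleftrightarrow> (w = [] \<and> d = s) \<or> (\<exists>t s'. Edge t s' \<in> set w \<and> (d = t \<or> d = s'))"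

end

theory Submission
  imports Defs
begin

text \<open>If u equals an edge path through vertices at least \<gamma>, conjugating by u fixes
  D(a) for a in G_\<gamma>, because each edge relation y D(a) y^-1 = D(a) applies
  along the path.

  For the converse we let Z act on the normal forms of Bass--Serre theory: a reduced
  word g_0 of the target vertex group followed by segments (v_i, g_i), each g_i a
  reduced word of G_{v_i} that does not start with a letter of the edge group. The
  action respects the defining relations, and every word equals the normal form it
  produces from the empty one. Let (g_0, segments) be the normal form of u. Acting with
  both sides of D(x) = u D(x) u^-1, x a generator of G_\<gamma>, on it shows that g_0
  commutes with x in the free group, that all later g_i are trivial and that every
  vertex exceeds the index of x. Since G_\<gamma> has two different generators, g_0 is
  trivial, so the normal form of u is an edge path through vertices at least \<gamma>.\<close>

section \<open>Reduced words of free groups\<close>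

definition gen_inv :: "'o \<times> bool \<Rightarrow> 'o \<times> bool" where
  "gen_inv p = (fst p, \<not> snd p)"

definition word_inv :: "('o \<times> bool) list \<Rightarrow> ('o \<times> bool) list" where
  "word_inv a = rev (map gen_inv a)"

lemma fst_gen_inv [simp]: "fst (gen_inv p) = fst p"
  by (simp add: gen_inv_def)

lemma gword_mono: "gword g a \<Longrightarrow> g \<le> g' \<Longrightarrow> gword g' a"
  for g g' :: "'o::wellorder"
  by (auto simp: gword_def intro: less_le_trans)

lemma gword_word_inv: "gword g a \<Longrightarrow> gword g (word_inv a)"
  by (auto simp: gword_def word_inv_def gen_inv_def)

text \<open>foldr red_cons a g is the reduced form of the product a g.\<close>

fun red_cons :: "'o \<times> bool \<Rightarrow> ('o \<times> bool) list \<Rightarrow> ('o \<times> bool) list" where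
  "red_cons p [] = [p]"
| "red_cons p (q # g) = (if q = gen_inv p then g else p # q # g)"

fun reduced :: "('o \<times> bool) list \<Rightarrow> bool" where
  "reduced [] = True"
| "reduced [p] = True"
| "reduced (p # q # g) \<longleftrightarrow> q \<noteq> gen_inv p \<and> reduced (q # g)"

lemma reduced_ConsD: "reduced (p # g) \<Longrightarrow> reduced g"
  by (cases g) auto

lemma reduced_red_cons: "reduced g \<Longrightarrow> reduced (red_cons p g)"
  by (cases g) (auto intro: reduced_ConsD)

lemma red_cons_gen_inv_cancel: "reduced g \<Longrightarrow> red_cons p (red_cons (gen_inv p) g) = g"
proof (cases g)
  case (Cons q g')
  assume "reduced g"
  then show ?thesis
    using Cons by (cases "q = p"; cases g') (auto simp: gen_inv_def)
qed simp

lemma reduced_takeWhile: "reduced g \<Longrightarrow> reduced (takeWhile P g)"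
  by (induction g rule: reduced.induct) auto

lemma reduced_dropWhile: "reduced g \<Longrightarrow> reduced (dropWhile P g)"
  by (induction g rule: reduced.induct) (auto intro: reduced_ConsD)

lemma reduced_append:
  "reduced g \<Longrightarrow> reduced h \<Longrightarrow> (g \<noteq> [] \<Longrightarrow> h \<noteq> [] \<Longrightarrow> hd h \<noteq> gen_inv (last g))
    \<Longrightarrow> reduced (g @ h)"
  by (induction g rule: reduced.induct) (auto, (cases h; auto))

lemma gword_red_cons: "gword t g \<Longrightarrow> fst p < t \<Longrightarrow> gword t (red_cons p g)"
  by (cases g) (auto simp: gword_def)

text \<open>Multiplying by a word of small letters never reaches past a first big letter.\<close>

lemma foldr_red_cons_append:
  assumes "\<forall>p\<in>set a. fst p < m" "\<forall>p\<in>set h. fst p < m" "r = [] \<or> \<not> fst (hd r) < m"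
  shows "foldr red_cons a (h @ r) = foldr red_cons a h @ r
    \<and> (\<forall>p\<in>set (foldr red_cons a h). fst p < m)"
  using assms(1)
proof (induction a)
  case (Cons p a)
  then have IH: "foldr red_cons a (h @ r) = foldr red_cons a h @ r"
      "\<forall>q\<in>set (foldr red_cons a h). fst q < m"
    and "fst p < m" by auto
  then show ?case
    using assms(3) by (cases "foldr red_cons a h"; cases r) (auto simp: gen_inv_def)
qed (use assms in simp)

lemma takeWhile_dropWhile_append:
  "\<forall>p\<in>set xs. P p \<Longrightarrow> ys = [] \<or> \<not> P (hd ys) \<Longrightarrow>
    takeWhile P (xs @ ys) = xs \<and> dropWhile P (xs @ ys) = ys"
  by (cases ys) auto

lemma foldr_red_cons_takeWhile_dropWhile:
  assumes "\<forall>p\<in>set a. fst p < m"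
  shows "takeWhile (\<lambda>p. fst p < m) (foldr red_cons a g)
      = foldr red_cons a (takeWhile (\<lambda>p. fst p < m) g)
    \<and> dropWhile (\<lambda>p. fst p < m) (foldr red_cons a g) = dropWhile (\<lambda>p. fst p < m) g"
proof -
  let ?P = "\<lambda>p. fst p < m"
  have "\<forall>p\<in>set (takeWhile ?P g). ?P p"
    by (auto dest: set_takeWhileD)
  moreover have stop: "dropWhile ?P g = [] \<or> \<not> ?P (hd (dropWhile ?P g))"
    using hd_dropWhile by blast
  ultimately have "foldr red_cons a (takeWhile ?P g @ dropWhile ?P g)
        = foldr red_cons a (takeWhile ?P g) @ dropWhile ?P g"
      "\<forall>p\<in>set (foldr red_cons a (takeWhile ?P g)). ?P p"
    using foldr_red_cons_append[OF assms] by blast+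
  then show ?thesis
    using takeWhile_dropWhile_append[of "foldr red_cons a (takeWhile ?P g)" ?P "dropWhile ?P g"] stop
    by simp
qed

lemma foldr_red_cons_snoc:
  "reduced g \<Longrightarrow>
    foldr red_cons g [x] = (if g \<noteq> [] \<and> last g = gen_inv x then butlast g else g @ [x])"
proof (induction g rule: reduced.induct)
  case (3 p q g)
  then show ?case
    by (cases "last (q # g) = gen_inv x"; cases g) auto
qed (auto simp: gen_inv_def)

text \<open>If g x = x g in the free group then g is a power of x; we only need that g
  starts with the generator of x.\<close>

lemma commuting_reduced_hd:
  assumes "reduced g" "foldr red_cons g [x] = red_cons x g" "g \<noteq> []"
  shows "fst (hd g) = fst x"
proof (cases "hd g = gen_inv x")
  case False
  then have xg: "red_cons x g = x # g"
    using assms(3) by (cases g) auto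
  show ?thesis
  proof (cases "last g = gen_inv x")
    case True
    then have "butlast g = x # g"
      using foldr_red_cons_snoc[OF assms(1), of x] assms(2,3) xg by simp
    then have "length (butlast g) = Suc (length g)" by simp
    then show ?thesis by simp
  next
    case False
    then have "g @ [x] = x # g"
      using foldr_red_cons_snoc[OF assms(1), of x] assms(2,3) xg by simp
    then show ?thesis
      using assms(3) by (metis hd_append list.sel(1))
  qed
qed simp

section \<open>Paths and equality in Z\<close>

lemma zpath_ge2: "zpath s t w \<Longrightarrow> ge2 s \<and> ge2 t"
  by (induction s t w rule: zpath.induct) auto

lemma zpath_append: "zpath s t (x @ y) \<longleftrightarrow> (\<exists>m. zpath m t x \<and> zpath s m y)"
proof (induction x arbitrary: t)
  case Nil
  then show ?case using zpath_ge2 by auto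
next
  case (Cons l x)
  then show ?case by (cases l) auto
qed

lemma zpath_Cons: "zpath s t (l # w) \<longleftrightarrow> (\<exists>m. zpath m t [l] \<and> zpath s m w)"
  using zpath_append[of s t "[l]" w] by simp

lemma D_Nil [simp]: "D v [] = []"
  by (simp add: D_def)

lemma D_Cons [simp]: "D v (p # a) = Gen v (fst p) (snd p) # D v a"
  by (simp add: D_def split: prod.split)

lemma D_append [simp]: "D v (a @ b) = D v a @ D v b"
  by (simp add: D_def)

lemma zpath_D_append: "zpath s t (D t a @ w) \<longleftrightarrow> gword t a \<and> zpath s t w"
  by (induction a) (auto simp: gword_def dest: zpath_ge2)

lemma zpath_D: "zpath s t (D t a) \<longleftrightarrow> gword t a \<and> s = t \<and> ge2 t"
  using zpath_D_append[of s t a "[]"] by auto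

lemma zinv_Nil [simp]: "zinv [] = []"
  by (simp add: zinv_def)

lemma zinv_append [simp]: "zinv (x @ y) = zinv y @ zinv x"
  by (simp add: zinv_def)

lemma zinv_Cons: "zinv (l # w) = zinv w @ [zinv_letter l]"
  by (simp add: zinv_def)

lemma zinv_D: "zinv (D v a) = D v (word_inv a)"
  by (induction a) (auto simp: zinv_def word_inv_def gen_inv_def)

lemma zpath_zinv: "zpath s t w \<Longrightarrow> zpath t s (zinv w)"
  by (induction s t w rule: zpath.induct) (auto simp: zinv_Cons zpath_append)

lemma zeq_zpath: "zeq s t w1 w2 \<Longrightarrow> zpath s t w1 \<and> zpath s t w2"
proof (induction rule: zeq.induct)
  case (zctx s t w1 w2 t' x s' y)
  then show ?case by (auto simp: zpath_append)
next
  case (zedge \<alpha> \<beta> a)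
  then have "gword \<beta> a" "gword \<alpha> a" by (auto simp: gword_def)
  with zedge show ?case by (auto simp: zpath_D_append zpath_D)
qed auto

lemma zeq_context:
  "zeq s t w1 w2 \<Longrightarrow> zpath t t' x \<Longrightarrow> zpath s' s y \<Longrightarrow>
    W1 = x @ w1 @ y \<Longrightarrow> W2 = x @ w2 @ y \<Longrightarrow> zeq s' t' W1 W2"
  using zctx by blast

lemma zeq_zinv: "zeq s t w1 w2 \<Longrightarrow> zeq t s (zinv w1) (zinv w2)"
proof (induction rule: zeq.induct)
  case (zrefl s t w)
  then show ?case by (simp add: zeq.zrefl zpath_zinv)
next
  case (zsym s t w1 w2)
  then show ?case by (simp add: zeq.zsym)
next
  case (ztrans s t w1 w2 w3)
  then show ?case by (meson zeq.ztrans)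
next
  case (zctx s t w1 w2 t' x s' y)
  show ?case by (rule zeq_context[OF zctx(4)]) (auto simp: zpath_zinv zctx)
next
  case (zfree v i b)
  then show ?case using zeq.zfree[of v i b] by (simp add: zinv_def)
next
  case (zedge \<alpha> \<beta> a)
  then have "zeq \<alpha> \<alpha> ([Edge \<alpha> \<beta>] @ D \<beta> (word_inv a) @ [Edge \<beta> \<alpha>]) (D \<alpha> (word_inv a))"
    by (intro zeq.zedge) (auto simp: gword_word_inv)
  then show ?case by (simp add: zinv_Cons zinv_D)
qed

lemma zeq_zinv_letter_cancel: "zpath s t [l] \<Longrightarrow> zeq s s [zinv_letter l, l] []"
proof (cases l)
  case (Gen v i b)
  assume "zpath s t [l]"
  then show ?thesis using zeq.zfree[of v i "\<not> b"] Gen by auto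
next
  case (Edge t' s')
  assume "zpath s t [l]"
  then show ?thesis using zeq.zedge[of s' t' "[]"] Edge by (auto simp: gword_def)
qed

lemma zeq_zinv_cancel: "zpath s t u \<Longrightarrow> zeq s s (zinv u @ u) []"
proof (induction u arbitrary: t)
  case Nil
  then show ?case using zpath_ge2 by (auto intro: zeq.zrefl)
next
  case (Cons l u)
  then obtain m where m: "zpath m t [l]" "zpath s m u"
    using zpath_Cons by blast
  have "zeq s s (zinv u @ [zinv_letter l, l] @ u) (zinv u @ [] @ u)"
    by (rule zeq_context[OF zeq_zinv_letter_cancel[OF m(1)]]) (auto simp: zpath_zinv m)
  moreover have "zeq s s (zinv u @ u) []"
    using Cons.IH m by blast
  ultimately show ?case by (auto simp: zinv_Cons intro: zeq.ztrans)
qed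

lemma zeq_conj_cong:
  assumes "zeq \<beta> \<alpha> u w" "gword \<beta> a"
  shows "zeq \<alpha> \<alpha> (u @ D \<beta> a @ zinv u) (w @ D \<beta> a @ zinv w)"
proof -
  have inv: "zeq \<alpha> \<beta> (zinv u) (zinv w)"
    using zeq_zinv[OF assms(1)] .
  have paths: "zpath \<alpha> \<beta> (zinv u)" "zpath \<beta> \<alpha> w" "ge2 \<alpha>" "ge2 \<beta>"
    using zeq_zpath[OF inv] zeq_zpath[OF assms(1)] zpath_ge2 by blast+
  have "zeq \<alpha> \<alpha> ([] @ u @ (D \<beta> a @ zinv u)) ([] @ w @ (D \<beta> a @ zinv u))"
    by (rule zeq_context[OF assms(1), where x="[]" and y="D \<beta> a @ zinv u"])
      (use paths assms(2) in \<open>auto simp: zpath_D_append\<close>)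
  moreover have "zeq \<alpha> \<alpha> ((w @ D \<beta> a) @ zinv u @ []) ((w @ D \<beta> a) @ zinv w @ [])"
    by (rule zeq_context[OF inv, where x="w @ D \<beta> a" and y="[]"])
      (use paths assms(2) in \<open>auto simp: zpath_append zpath_D\<close>)
  ultimately show ?thesis
    by (auto intro: zeq.ztrans)
qed

lemma zeq_D_conj_edge_word:
  assumes "zpath \<beta> \<alpha> w" "edge_word w" "\<forall>t s. Edge t s \<in> set w \<longrightarrow> c \<le> t \<and> c \<le> s"
    and "c \<le> \<alpha>" "gword c a"
  shows "zeq \<alpha> \<alpha> (D \<alpha> a) (w @ D \<beta> a @ zinv w)"
  using assms
proof (induction w arbitrary: \<alpha>)
  case Nil
  then have "\<alpha> = \<beta>" "ge2 \<alpha>" "gword \<alpha> a"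
    by (auto simp: gword_def)
  then show ?case by (auto intro: zeq.zrefl simp: zpath_D)
next
  case (Cons l w)
  obtain s where l: "l = Edge \<alpha> s" and s: "ge2 \<alpha>" "ge2 s" "s \<noteq> \<alpha>" "zpath \<beta> s w" "c \<le> s"
    using Cons.prems(1-3) by (cases l) (auto simp: edge_word_def)
  have "zeq s s (D s a) (w @ D \<beta> a @ zinv w)"
    using Cons.IH[OF s(4) _ _ s(5) Cons.prems(5)] Cons.prems(2,3) by (auto simp: edge_word_def)
  then have "zeq \<alpha> \<alpha> ([Edge \<alpha> s] @ D s a @ [Edge s \<alpha>])
      ([Edge \<alpha> s] @ (w @ D \<beta> a @ zinv w) @ [Edge s \<alpha>])"
    by (rule zeq_context[where x="[Edge \<alpha> s]" and y="[Edge s \<alpha>]"]) (use s in auto)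
  moreover have "zeq \<alpha> \<alpha> ([Edge \<alpha> s] @ D s a @ [Edge s \<alpha>]) (D \<alpha> a)"
    using s Cons.prems(4,5) by (intro zeq.zedge) (auto simp: gword_def)
  ultimately show ?case
    using l by (auto simp: zinv_Cons intro: zeq.ztrans zeq.zsym)
qed

lemma conj_D_if_edge_word:
  assumes "edge_word w" "zeq \<beta> \<alpha> u w" "\<forall>t s. Edge t s \<in> set w \<longrightarrow> \<gamma> \<le> t \<and> \<gamma> \<le> s"
    and "\<gamma> \<le> \<alpha>" "\<gamma> \<le> \<beta>" "gword \<gamma> a"
  shows "zeq \<alpha> \<alpha> (D \<alpha> a) (u @ D \<beta> a @ zinv u)"
proof -
  have "zeq \<alpha> \<alpha> (D \<alpha> a) (w @ D \<beta> a @ zinv w)"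
    using zeq_D_conj_edge_word zeq_zpath assms(1-4,6) by blast
  moreover have "zeq \<alpha> \<alpha> (u @ D \<beta> a @ zinv u) (w @ D \<beta> a @ zinv w)"
    using zeq_conj_cong[OF assms(2) gword_mono[OF assms(6,5)]] .
  ultimately show ?thesis
    by (meson zeq.zsym zeq.ztrans)
qed

section \<open>Normal forms and the action of Z on them\<close>

type_synonym 'o segs = "('o \<times> ('o \<times> bool) list) list"
type_synonym 'o nf = "('o \<times> bool) list \<times> 'o segs"

text \<open>A normal form (g0, [(v1, g1), ..., (vn, gn)]) at the vertex t = v0 stands for the
  word D_t(g0) y^{v1}_t D_{v1}(g1) y^{v2}_{v1} ... D_{vn}(gn), see nfword. These are the Bass--Serre normal forms for the transversal of reduced
  words not starting in the edge group.\<close>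

fun valid_segs :: "'o::wellorder \<Rightarrow> 'o segs \<Rightarrow> bool" where
  "valid_segs t [] = True"
| "valid_segs t ((v, g) # rest) \<longleftrightarrow>
     reduced g \<and> gword v g \<and> (g \<noteq> [] \<longrightarrow> min t v \<le> fst (hd g))
     \<and> (g = [] \<longrightarrow> rest = [] \<or> fst (hd rest) \<noteq> t) \<and> valid_segs v rest"

definition valid_nf :: "'o::wellorder \<Rightarrow> 'o nf \<Rightarrow> bool" where
  "valid_nf t N \<longleftrightarrow> reduced (fst N) \<and> gword t (fst N) \<and> valid_segs t (snd N)"

fun segword :: "'o \<Rightarrow> 'o segs \<Rightarrow> 'o zletter list" where
  "segword t [] = []"
| "segword t ((v, g) # rest) = Edge t v # D v g @ segword v rest"

definition nfword :: "'o \<Rightarrow> 'o nf \<Rightarrow> 'o zletter list" where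
  "nfword t N = D t (fst N) @ segword t (snd N)"

text \<open>The edge y^t_{t'} moves past the longest prefix of g0 in the edge group; then it
  either cancels against a following y^{t'}_t or starts a new segment.\<close>

fun act_letter :: "'o::wellorder zletter \<Rightarrow> 'o nf \<Rightarrow> 'o nf" where
  "act_letter (Gen v i b) (g0, segs) = (red_cons (i, b) g0, segs)"
| "act_letter (Edge t' t) (g0, segs) =
    (if dropWhile (\<lambda>p. fst p < min t' t) g0 = [] \<and> segs \<noteq> [] \<and> fst (hd segs) = t'
     then (g0 @ snd (hd segs), tl segs)
     else (takeWhile (\<lambda>p. fst p < min t' t) g0,
           (t, dropWhile (\<lambda>p. fst p < min t' t) g0) # segs))"

definition act :: "'o::wellorder zletter list \<Rightarrow> 'o nf \<Rightarrow> 'o nf" where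
  "act w N = foldr act_letter w N"

lemma act_Nil [simp]: "act [] N = N"
  by (simp add: act_def)

lemma act_Cons [simp]: "act (l # w) N = act_letter l (act w N)"
  by (simp add: act_def)

lemma act_append [simp]: "act (x @ y) N = act x (act y N)"
  by (simp add: act_def)

lemma act_D: "act (D v a) (g, segs) = (foldr red_cons a g, segs)"
  by (induction a) auto

lemma valid_nf_empty: "valid_nf s ([], [])"
  by (simp add: valid_nf_def gword_def)

lemma valid_act_letter_Edge:
  assumes "ge2 t" "valid_nf s N"
  shows "valid_nf t (act_letter (Edge t s) N)"
proof -
  obtain g0 segs where N_eq: "N = (g0, segs)"
    by force
  define P where "P = (\<lambda>p::'a \<times> bool. fst p < min t s)"
  have N: "reduced g0" "gword s g0" "valid_segs s segs"
    using assms(2) N_eq by (auto simp: valid_nf_def)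
  show ?thesis
  proof (cases "dropWhile P g0 = [] \<and> segs \<noteq> [] \<and> fst (hd segs) = t")
    case True
    then obtain g1 rest where segs: "segs = (t, g1) # rest"
      by (cases segs) auto
    have small: "\<forall>p\<in>set g0. P p"
      using True by simp
    have g1: "reduced g1" "gword t g1" "g1 \<noteq> [] \<longrightarrow> min s t \<le> fst (hd g1)" "valid_segs t rest"
      using N segs by auto
    have "reduced (g0 @ g1)"
    proof (rule reduced_append[OF N(1) g1(1)])
      assume "g0 \<noteq> []" "g1 \<noteq> []"
      then show "hd g1 \<noteq> gen_inv (last g0)"
        using small g1(3) unfolding P_def by (metis fst_gen_inv last_in_set min.commute not_le)
    qed
    moreover have "gword t (g0 @ g1)"
      using small g1(2) unfolding gword_def P_def by auto
    ultimately show ?thesis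
      using True segs g1 N_eq by (auto simp: valid_nf_def P_def)
  next
    case False
    have "gword t (takeWhile P g0)" "gword s (dropWhile P g0)"
      using N(2) unfolding gword_def P_def by (auto dest: set_takeWhileD set_dropWhileD)
    moreover have "dropWhile P g0 \<noteq> [] \<longrightarrow> min t s \<le> fst (hd (dropWhile P g0))"
      using hd_dropWhile[of P g0] unfolding P_def by (simp add: not_less min_le_iff_disj)
    ultimately show ?thesis
      using False N N_eq by (auto simp: valid_nf_def P_def reduced_takeWhile reduced_dropWhile)
  qed
qed

lemma valid_act_letter:
  assumes "zpath s t [l]" "valid_nf s N"
  shows "valid_nf t (act_letter l N)"
proof (cases l)
  case Gen
  then show ?thesis
    using assms by (cases N) (auto simp: valid_nf_def reduced_red_cons gword_red_cons)
next
  case (Edge t' s')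
  then have "l = Edge t s" "ge2 t"
    using assms(1) by auto
  then show ?thesis
    using valid_act_letter_Edge[OF _ assms(2)] by blast
qed

lemma valid_act: "zpath s t w \<Longrightarrow> valid_nf s N \<Longrightarrow> valid_nf t (act w N)"
proof (induction w arbitrary: t)
  case (Cons l w)
  then obtain m where "zpath m t [l]" "zpath s m w"
    using zpath_Cons by blast
  with Cons show ?case
    using valid_act_letter by fastforce
qed auto

lemma act_letter_Edge_Edge:
  assumes "valid_nf \<alpha> N"
  shows "act_letter (Edge \<alpha> \<beta>) (act_letter (Edge \<beta> \<alpha>) N) = N"
proof -
  obtain g0 segs where N: "N = (g0, segs)"
    by force
  define P where "P = (\<lambda>p::'a \<times> bool. fst p < min \<alpha> \<beta>)"
  show ?thesis
  proof (cases "dropWhile P g0 = [] \<and> segs \<noteq> [] \<and> fst (hd segs) = \<beta>")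
    case True
    then obtain g1 rest where segs: "segs = (\<beta>, g1) # rest"
      by (cases segs) auto
    have g1: "g1 \<noteq> [] \<longrightarrow> min \<alpha> \<beta> \<le> fst (hd g1)"
        "g1 = [] \<longrightarrow> rest = [] \<or> fst (hd rest) \<noteq> \<alpha>"
      using assms N segs by (auto simp: valid_nf_def)
    then have "g1 = [] \<or> \<not> P (hd g1)"
      unfolding P_def not_less by blast
    moreover note g1(2)
    moreover have "\<forall>p\<in>set g0. P p"
      using True by simp
    ultimately show ?thesis
      using True N segs takeWhile_dropWhile_append[of g0 P g1]
      by (auto simp: P_def min.commute)
  next
    case False
    have "act_letter (Edge \<beta> \<alpha>) N = (takeWhile P g0, (\<alpha>, dropWhile P g0) # segs)"
      using False N by (auto simp: P_def min.commute simp del: min_less_iff_conj)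
    moreover have "dropWhile P (takeWhile P g0) = []"
      by (auto dest: set_takeWhileD)
    ultimately show ?thesis
      using N by (simp add: P_def del: min_less_iff_conj)
  qed
qed

lemma act_D_Edge:
  assumes "valid_nf \<alpha> N" "gword (min \<alpha> \<beta>) a"
  shows "act (D \<beta> a) (act_letter (Edge \<beta> \<alpha>) N)
    = act_letter (Edge \<beta> \<alpha>) (act (D \<alpha> a) N)"
proof -
  obtain g0 segs where N: "N = (g0, segs)"
    by force
  define P where "P = (\<lambda>p::'a \<times> bool. fst p < min \<alpha> \<beta>)"
  have a: "\<forall>p\<in>set a. fst p < min \<alpha> \<beta>"
    using assms(2) by (auto simp: gword_def)
  have split: "takeWhile P (foldr red_cons a g0) = foldr red_cons a (takeWhile P g0)"
      "dropWhile P (foldr red_cons a g0) = dropWhile P g0"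
    using foldr_red_cons_takeWhile_dropWhile[OF a, of g0] unfolding P_def by blast+
  show ?thesis
  proof (cases "dropWhile P g0 = [] \<and> segs \<noteq> [] \<and> fst (hd segs) = \<beta>")
    case True
    then obtain g1 rest where segs: "segs = (\<beta>, g1) # rest"
      by (cases segs) auto
    have "g1 \<noteq> [] \<longrightarrow> min \<alpha> \<beta> \<le> fst (hd g1)"
      using assms N segs by (auto simp: valid_nf_def)
    then have "g1 = [] \<or> \<not> fst (hd g1) < min \<alpha> \<beta>"
      unfolding not_less by blast
    moreover have "\<forall>p\<in>set g0. fst p < min \<alpha> \<beta>"
      using True by (simp add: P_def del: min_less_iff_conj)
    ultimately have "foldr red_cons a (g0 @ g1) = foldr red_cons a g0 @ g1"
      using foldr_red_cons_append[OF a] by blast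
    then show ?thesis
      using True N segs split by (simp add: act_D P_def min.commute del: min_less_iff_conj)
  next
    case False
    then show ?thesis
      using N split by (auto simp: act_D P_def min.commute simp del: min_less_iff_conj)
  qed
qed

lemma act_zeq:
  assumes "zeq s t w1 w2" "valid_nf s N"
  shows "act w1 N = act w2 N"
  using assms
proof (induction arbitrary: N rule: zeq.induct)
  case (zctx s t w1 w2 t' x s' y)
  then have "valid_nf s (act y N)"
    using valid_act by blast
  with zctx show ?case by simp
next
  case (zfree v i b)
  then show ?case
    using red_cons_gen_inv_cancel[of "fst N" "(i, b)"]
    by (cases N) (auto simp: valid_nf_def gen_inv_def)
next
  case (zedge \<alpha> \<beta> a)
  then have a: "gword (min \<alpha> \<beta>) a"
    by simp
  then have "zpath \<alpha> \<alpha> (D \<alpha> a)"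
    using zedge by (auto simp: zpath_D gword_def)
  then have valid: "valid_nf \<alpha> (act (D \<alpha> a) N)"
    using valid_act zedge.prems by blast
  have "act ([Edge \<alpha> \<beta>] @ D \<beta> a @ [Edge \<beta> \<alpha>]) N
      = act_letter (Edge \<alpha> \<beta>) (act (D \<beta> a) (act_letter (Edge \<beta> \<alpha>) N))"
    by (simp del: act_letter.simps)
  also have "\<dots> = act_letter (Edge \<alpha> \<beta>) (act_letter (Edge \<beta> \<alpha>) (act (D \<alpha> a) N))"
    by (simp only: act_D_Edge[OF zedge.prems a])
  also have "\<dots> = act (D \<alpha> a) N"
    by (rule act_letter_Edge_Edge[OF valid])
  finally show ?case .
qed auto

section \<open>Every word equals its normal form\<close>

lemma zeq_Edge_D_commute:
  assumes "ge2 t" "ge2 t'" "t \<noteq> t'" "gword (min t t') h"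
  shows "zeq t' t ([Edge t t'] @ D t' h) (D t h @ [Edge t t'])"
proof -
  have h: "gword t' h" "gword t h"
    using assms(4) by (auto simp: gword_def)
  have "zeq t t ([Edge t t'] @ D t' h @ [Edge t' t]) (D t h)"
    using assms by (intro zeq.zedge) auto
  then have "zeq t' t ([Edge t t'] @ D t' h @ [Edge t' t] @ [Edge t t']) (D t h @ [Edge t t'])"
    by (rule zeq_context[where x="[]" and y="[Edge t t']"]) (use assms in auto)
  moreover have "zeq t' t ([Edge t t'] @ D t' h @ [Edge t' t, Edge t t']) ([Edge t t'] @ D t' h)"
    by (rule zeq_context[OF zeq_zinv_letter_cancel[of t' t "Edge t t'"],
          where x="[Edge t t'] @ D t' h" and y="[]"])
      (use assms h in \<open>auto simp: zpath_D_append zpath_D\<close>)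
  ultimately show ?thesis
    by (auto intro: zeq.ztrans zeq.zsym)
qed

lemma zeq_Gen_nfword:
  assumes "zpath s t (nfword t N)" "i < t"
  shows "zeq s t (Gen t i b # nfword t N) (nfword t (act_letter (Gen t i b) N))"
proof -
  obtain g0 segs where N: "N = (g0, segs)"
    by force
  have paths: "gword t g0" "zpath s t (segword t segs)" "ge2 t"
    using assms(1) N zpath_ge2 by (auto simp: nfword_def zpath_D_append)
  show ?thesis
  proof (cases "g0 \<noteq> [] \<and> hd g0 = (i, \<not> b)")
    case True
    then obtain g0' where g0: "g0 = (i, \<not> b) # g0'"
      by (cases g0) auto
    have "zeq s t ([] @ [Gen t i b, Gen t i (\<not> b)] @ (D t g0' @ segword t segs))
        ([] @ [] @ (D t g0' @ segword t segs))"
      by (rule zeq_context[OF zeq.zfree[of t i b], where x="[]" and y="D t g0' @ segword t segs"])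
        (use assms paths g0 in \<open>auto simp: zpath_D_append gword_def\<close>)
    then show ?thesis
      using N g0 by (simp add: nfword_def gen_inv_def)
  next
    case False
    then have "act_letter (Gen t i b) N = ((i, b) # g0, segs)"
      using N by (cases g0) (auto simp: gen_inv_def)
    moreover have "zpath s t (Gen t i b # nfword t N)"
      using assms paths by simp
    ultimately show ?thesis
      using N by (auto simp: nfword_def intro: zeq.zrefl)
  qed
qed

lemma zeq_Edge_nfword:
  assumes "zpath s t' (nfword t' N)" "ge2 t" "t \<noteq> t'"
  shows "zeq s t (Edge t t' # nfword t' N) (nfword t (act_letter (Edge t t') N))"
proof -
  obtain g0 segs where N: "N = (g0, segs)"
    by force
  define P where "P = (\<lambda>p::'a \<times> bool. fst p < min t t')"
  have paths: "gword t' g0" "zpath s t' (segword t' segs)" "ge2 t'"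
    using assms(1) N zpath_ge2 by (auto simp: nfword_def zpath_D_append)
  show ?thesis
  proof (cases "dropWhile P g0 = [] \<and> segs \<noteq> [] \<and> fst (hd segs) = t")
    case True
    then obtain g1 rest where segs: "segs = (t, g1) # rest"
      by (cases segs) auto
    have "gword (min t t') g0"
      using True by (auto simp: P_def gword_def)
    then have "zeq t t ([Edge t t'] @ D t' g0 @ [Edge t' t]) (D t g0)"
      using assms paths by (intro zeq.zedge) auto
    then have "zeq s t ([Edge t t'] @ D t' g0 @ [Edge t' t] @ (D t g1 @ segword t rest))
        ([] @ D t g0 @ (D t g1 @ segword t rest))"
      by (rule zeq_context[where x="[]" and y="D t g1 @ segword t rest"])
        (use assms paths segs in auto)
    moreover have "act_letter (Edge t t') N = (g0 @ g1, rest)"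
      using True segs N by (simp add: P_def)
    ultimately show ?thesis
      using N segs by (simp add: nfword_def)
  next
    case False
    have "gword (min t t') (takeWhile P g0)" "gword t' (dropWhile P g0)"
      using paths(1) unfolding P_def gword_def by (auto dest: set_takeWhileD set_dropWhileD)
    then have "zeq s t ([] @ ([Edge t t'] @ D t' (takeWhile P g0)) @ (D t' (dropWhile P g0) @ segword t' segs))
        ([] @ (D t (takeWhile P g0) @ [Edge t t']) @ (D t' (dropWhile P g0) @ segword t' segs))"
      by (intro zeq_context[OF zeq_Edge_D_commute,
            where x="[]" and y="D t' (dropWhile P g0) @ segword t' segs"])
        (use assms paths in \<open>auto simp: zpath_D_append\<close>)
    moreover have "D t' g0 = D t' (takeWhile P g0) @ D t' (dropWhile P g0)"
      by (metis D_append takeWhile_dropWhile_id)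
    moreover have "act_letter (Edge t t') N = (takeWhile P g0, (t', dropWhile P g0) # segs)"
      using False N by (auto simp: P_def)
    ultimately show ?thesis
      using N by (simp add: nfword_def)
  qed
qed

lemma zeq_nfword_act: "zpath s t w \<Longrightarrow> zeq s t w (nfword t (act w ([], [])))"
proof (induction w arbitrary: t)
  case Nil
  then show ?case by (auto simp: nfword_def intro: zeq.zrefl)
next
  case (Cons l w)
  then obtain m where m: "zpath m t [l]" "zpath s m w"
    using zpath_Cons by blast
  define N where "N = act w ([], [])"
  have IH: "zeq s m w (nfword m N)"
    using Cons.IH m N_def by blast
  then have "zeq s t ([l] @ w @ []) ([l] @ nfword m N @ [])"
    by (rule zeq_context) (use m zpath_ge2[OF m(2)] in auto)
  moreover have "zeq s t (l # nfword m N) (nfword t (act_letter l N))"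
  proof (cases l)
    case (Gen v i b)
    then show ?thesis
      using zeq_zpath[OF IH] m(1) zeq_Gen_nfword[of s t N i b] by auto
  next
    case (Edge t' s')
    then show ?thesis
      using zeq_zpath[OF IH] m(1) zeq_Edge_nfword[of s m N t] by auto
  qed
  ultimately show ?case
    using N_def by (auto intro: zeq.ztrans)
qed

section \<open>Normal forms fixed by conjugation with a generator\<close>

lemma length_act_segword: "length (snd (act (segword t segs) N)) \<le> length (snd N) + length segs"
proof (induction segs arbitrary: t)
  case (Cons p segs)
  obtain v g where p: "p = (v, g)"
    by force
  obtain h s where hs: "act (segword v segs) N = (h, s)"
    by force
  have "length s \<le> length (snd N) + length segs"
    using Cons.IH[of v] hs by simp
  then show ?case
    using p hs by (auto simp: act_D)
qed simp

text \<open>An edge adds at most one segment; the length bound excludes the cancelling case.\<close>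

lemma act_letter_Edge_eq_Cons:
  assumes "act_letter (Edge t v) (c, s) = (h, (v, g) # rest)" "length s \<le> length rest"
  shows "takeWhile (\<lambda>p. fst p < min t v) c = h \<and> dropWhile (\<lambda>p. fst p < min t v) c = g
    \<and> s = rest"
proof (cases "dropWhile (\<lambda>p. fst p < min t v) c = [] \<and> s \<noteq> [] \<and> fst (hd s) = t")
  case True
  then have "act_letter (Edge t v) (c, s) = (c @ snd (hd s), tl s)"
    unfolding act_letter.simps by (rule if_P)
  then have "length (tl s) = Suc (length rest)"
    using assms(1) by simp
  then show ?thesis
    using assms(2) by simp
next
  case False
  then have "act_letter (Edge t v) (c, s)
      = (takeWhile (\<lambda>p. fst p < min t v) c, (v, dropWhile (\<lambda>p. fst p < min t v) c) # s)"
    unfolding act_letter.simps by (rule if_not_P)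
  then show ?thesis
    using assms(1) by simp
qed

lemma split_foldr_red_cons_snoc:
  assumes "reduced g" "g \<noteq> [] \<Longrightarrow> \<not> P (hd g)"
    and "takeWhile P (foldr red_cons g [x]) = h" "dropWhile P (foldr red_cons g [x]) = g"
  shows "g = [] \<and> h = [x] \<and> P x"
proof (cases "g = []")
  case True
  then show ?thesis
    using assms(3,4) by (cases "P x") auto
next
  case False
  have hg: "h @ g = foldr red_cons g [x]"
    using assms(3,4) takeWhile_dropWhile_id by metis
  show ?thesis
  proof (cases "last g = gen_inv x")
    case True
    then have "h @ g = butlast g"
      using hg foldr_red_cons_snoc[OF assms(1)] False by simp
    then have "length (h @ g) < length g"
      using False by simp
    then show ?thesis by simp
  next
    case last: False
    then have "foldr red_cons g [x] = g @ [x]"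
      using foldr_red_cons_snoc[OF assms(1)] False by simp
    then have "dropWhile P (foldr red_cons g [x]) = g @ [x]"
      using assms(2) False by (simp add: dropWhile_eq_self_iff)
    then show ?thesis
      using assms(4) by simp
  qed
qed

fun edge_segs :: "('o \<Rightarrow> bool) \<Rightarrow> 'o \<Rightarrow> 'o segs \<Rightarrow> bool" where
  "edge_segs P t [] = True"
| "edge_segs P t ((v, g) # rest) \<longleftrightarrow> g = [] \<and> P t \<and> P v \<and> edge_segs P v rest"

lemma act_segword_generator:
  assumes "valid_segs t segs" "act (segword t segs) ([(j, True)], []) = (h, segs)"
  shows "h = [(j, True)] \<and> edge_segs (\<lambda>d. j < d) t segs"
  using assms
proof (induction segs arbitrary: t h)
  case (Cons p rest)
  obtain v g where p: "p = (v, g)"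
    by force
  obtain h1 s1 where hs: "act (segword v rest) ([(j, True)], []) = (h1, s1)"
    by force
  have "length s1 \<le> length rest"
    using length_act_segword[of v rest "([(j, True)], [])"] hs by simp
  moreover have "act_letter (Edge t v) (foldr red_cons g h1, s1) = (h, (v, g) # rest)"
    using Cons.prems(2) p hs by (simp add: act_D del: act_letter.simps)
  ultimately have split: "takeWhile (\<lambda>p. fst p < min t v) (foldr red_cons g h1) = h"
      "dropWhile (\<lambda>p. fst p < min t v) (foldr red_cons g h1) = g" "s1 = rest"
    using act_letter_Edge_eq_Cons by blast+
  have g: "reduced g" "g \<noteq> [] \<longrightarrow> min t v \<le> fst (hd g)" "valid_segs v rest"
    using Cons.prems(1) p by auto
  have h1: "h1 = [(j, True)]" and rest: "edge_segs (\<lambda>d. j < d) v rest"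
    using Cons.IH[OF g(3)] hs split(3) by auto
  have "g = [] \<and> h = [(j, True)] \<and> j < min t v"
    using split_foldr_red_cons_snoc[OF g(1) _ split(1,2)[unfolded h1]] g(2)
    by (auto simp: not_less simp del: min_less_iff_conj)
  then show ?case
    using p rest by simp
qed simp

lemma edge_segs_lower_bound:
  fixes c :: "'o::linorder"
  assumes "\<forall>j<c. edge_segs (\<lambda>d. j < d) t segs" "j0 < c"
  shows "edge_segs (\<lambda>d. c \<le> d) t segs"
  using assms(1)
proof (induction segs arbitrary: t)
  case (Cons p rest)
  obtain v g where p: "p = (v, g)"
    by force
  have "\<forall>j<c. j < t \<and> j < v"
    using Cons.prems p by auto
  then have "\<not> t < c" "\<not> v < c"
    by auto
  then have "c \<le> t" "c \<le> v"
    by simp_all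
  then show ?case
    using Cons p assms(2) by auto
qed simp

lemma edge_word_segword: "edge_segs P t segs \<Longrightarrow> edge_word (segword t segs)"
  by (induction t segs rule: segword.induct) (auto simp: edge_word_def)

lemma Edge_in_segword:
  "edge_segs P t segs \<Longrightarrow> Edge a b \<in> set (segword t segs) \<Longrightarrow> P a \<and> P b"
  by (induction t segs rule: segword.induct) auto

lemma freely_reduced_Cons:
  "freely_reduced (l # w) \<longleftrightarrow> (w = [] \<or> l \<noteq> zinv_letter (hd w)) \<and> freely_reduced w"
  unfolding freely_reduced_def
  by (cases w) (auto simp: nth_Cons split: nat.splits)

lemma freely_reduced_segword:
  "edge_segs P t segs \<Longrightarrow> valid_segs t segs \<Longrightarrow> freely_reduced (segword t segs)"
proof (induction t segs rule: segword.induct)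
  case (2 t v g rest)
  then show ?case by (cases rest) (auto simp: freely_reduced_Cons)
qed (simp add: freely_reduced_def)

lemma nf_conj_generator:
  assumes u: "zpath \<beta> \<alpha> u" and j: "j < \<beta>"
    and conj: "zeq \<alpha> \<alpha> (D \<alpha> [(j, True)]) (u @ D \<beta> [(j, True)] @ zinv u)"
    and nf: "act u ([], []) = (g0, segs)"
  shows "foldr red_cons g0 [(j, True)] = red_cons (j, True) g0 \<and> edge_segs (\<lambda>d. j < d) \<alpha> segs"
proof -
  define x where "x = (j, True)"
  have valid: "valid_nf \<alpha> (g0, segs)"
    using valid_act[OF u valid_nf_empty] nf by simp
  have "act (zinv u) (g0, segs) = act (zinv u @ u) ([], [])"
    using nf by simp
  also have "\<dots> = ([], [])"
    using act_zeq[OF zeq_zinv_cancel[OF u] valid_nf_empty] by simp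
  finally have inv: "act (zinv u) (g0, segs) = ([], [])" .
  have "valid_nf \<beta> ([x], [])"
    using j by (simp add: valid_nf_def gword_def x_def)
  then have u_x: "act u ([x], []) = act (nfword \<alpha> (g0, segs)) ([x], [])"
    using act_zeq zeq_nfword_act[OF u] nf by metis
  obtain h segs' where hs: "act (segword \<alpha> segs) ([x], []) = (h, segs')"
    by force
  have "(red_cons x g0, segs) = act (D \<alpha> [x]) (g0, segs)"
    by (simp add: act_D)
  also have "\<dots> = act u (act (D \<beta> [x]) (act (zinv u) (g0, segs)))"
    using act_zeq[OF conj valid] by (simp add: x_def)
  also have "\<dots> = (foldr red_cons g0 h, segs')"
    using inv u_x hs by (simp add: act_D nfword_def)
  finally have "segs' = segs" "foldr red_cons g0 h = red_cons x g0"
    by auto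
  moreover have "valid_segs \<alpha> segs"
    using valid by (simp add: valid_nf_def)
  ultimately show ?thesis
    using act_segword_generator hs x_def by blast
qed

lemma edge_word_if_conj_D:
  assumes u: "zpath \<beta> \<alpha> u" and \<gamma>: "ge2 \<gamma>" "\<gamma> \<le> \<beta>"
    and conj: "\<forall>a. gword \<gamma> a \<longrightarrow> zeq \<alpha> \<alpha> (D \<alpha> a) (u @ D \<beta> a @ zinv u)"
  obtains w where "edge_word w" "freely_reduced w" "zeq \<beta> \<alpha> u w"
    "\<forall>t s. Edge t s \<in> set w \<longrightarrow> \<gamma> \<le> t \<and> \<gamma> \<le> s"
proof -
  obtain g0 segs where nf: "act u ([], []) = (g0, segs)"
    by force
  have gen: "foldr red_cons g0 [(j, True)] = red_cons (j, True) g0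
      \<and> edge_segs (\<lambda>d. j < d) \<alpha> segs"
    if "j < \<gamma>" for j
  proof (rule nf_conj_generator[OF u _ _ nf])
    show "j < \<beta>"
      using that \<gamma>(2) by (rule less_le_trans)
    show "zeq \<alpha> \<alpha> (D \<alpha> [(j, True)]) (u @ D \<beta> [(j, True)] @ zinv u)"
      using conj[rule_format, of "[(j, True)]"] that by (simp add: gword_def)
  qed
  obtain j0 j1 where j: "j0 < j1" "j1 < \<gamma>"
    using \<gamma>(1) unfolding ge2_def by blast
  have valid: "valid_nf \<alpha> (g0, segs)"
    using valid_act[OF u valid_nf_empty] nf by simp
  have "g0 = []"
  proof (rule ccontr)
    assume "g0 \<noteq> []"
    moreover have "reduced g0"
      using valid by (simp add: valid_nf_def)
    ultimately have "fst (hd g0) = j" if "j < \<gamma>" for j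
      using commuting_reduced_hd gen[OF that] by fastforce
    then have "fst (hd g0) = j0" "fst (hd g0) = j1"
      using j by (auto intro: less_trans)
    with j show False by simp
  qed
  then have "zeq \<beta> \<alpha> u (segword \<alpha> segs)"
    using zeq_nfword_act[OF u] nf by (simp add: nfword_def)
  moreover have "edge_segs (\<lambda>d. \<gamma> \<le> d) \<alpha> segs"
    using edge_segs_lower_bound[of \<gamma>] gen j by blast
  ultimately show thesis
    using that edge_word_segword freely_reduced_segword Edge_in_segword valid
    by (metis valid_nf_def snd_conv)
qed

theorem lemma3p11:
  fixes \<alpha> \<beta> \<gamma> :: "'o::wellorder" and u :: "'o zletter list"
  assumes "uncountable_cofinality (UNIV :: 'o set)"
    and "ge2 \<alpha>" and "ge2 \<beta>"
    and "zpath \<beta> \<alpha> u"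
    and "ge2 \<gamma>" and "\<gamma> \<le> min \<alpha> \<beta>"
  shows "(\<exists>w. edge_word w \<and> freely_reduced w \<and> zpath \<beta> \<alpha> w \<and> zeq \<beta> \<alpha> u w
             \<and> (\<forall>d. passes_through \<alpha> w d \<longrightarrow> \<gamma> \<le> d))
         \<longleftrightarrow> (\<forall>a. gword \<gamma> a \<longrightarrow> zeq \<alpha> \<alpha> (D \<alpha> a) (u @ D \<beta> a @ zinv u))"
proof
  assume "\<exists>w. edge_word w \<and> freely_reduced w \<and> zpath \<beta> \<alpha> w \<and> zeq \<beta> \<alpha> u w
             \<and> (\<forall>d. passes_through \<alpha> w d \<longrightarrow> \<gamma> \<le> d)"
  then obtain w where "edge_word w" "zeq \<beta> \<alpha> u w"
      "\<forall>t s. Edge t s \<in> set w \<longrightarrow> \<gamma> \<le> t \<and> \<gamma> \<le> s"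
    unfolding passes_through_def by blast
  then show "\<forall>a. gword \<gamma> a \<longrightarrow> zeq \<alpha> \<alpha> (D \<alpha> a) (u @ D \<beta> a @ zinv u)"
    using conj_D_if_edge_word assms(6) by auto
next
  assume "\<forall>a. gword \<gamma> a \<longrightarrow> zeq \<alpha> \<alpha> (D \<alpha> a) (u @ D \<beta> a @ zinv u)"
  then obtain w where w: "edge_word w" "freely_reduced w" "zeq \<beta> \<alpha> u w"
      "\<forall>t s. Edge t s \<in> set w \<longrightarrow> \<gamma> \<le> t \<and> \<gamma> \<le> s"
    using edge_word_if_conj_D assms(4-6) by (metis min.bounded_iff)
  moreover have "zpath \<beta> \<alpha> w"
    using zeq_zpath[OF w(3)] by simp
  moreover have "\<gamma> \<le> d" if "passes_through \<alpha> w d" for d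
    using that w(4) assms(6) unfolding passes_through_def by auto
  ultimately show "\<exists>w. edge_word w \<and> freely_reduced w \<and> zpath \<beta> \<alpha> w \<and> zeq \<beta> \<alpha> u w
             \<and> (\<forall>d. passes_through \<alpha> w d \<longrightarrow> \<gamma> \<le> d)"
    by blast
qed

end
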